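(* Let $R\subset S$ be an integral FCP ring extension. Then $R\subset S$ has a critical ideal if and only if $R\subset S$ is $M$-crucial for some $M\in\mathrm{Max}(R)$. In this case $M$ is the critical ideal of the extension and $M=\sqrt{(R:R[x])}$ for each $x\in S\setminus R$.
   Context: Rings are commutative and unital. An extension $R\subseteq S$ is FCP if every chain in the poset of $R$-subalgebras of $S$ is finite. $(R:T)=\{r\in R\mid rT\subseteq R\}$ for $T\supseteq R$, and $R:x=\{r\in R\mid rx\in R\}$. An ideal $J$ of $R$ is a critical ideal of $R\subset S$ if $J=\sqrt{R:x}$ for every $x\in S\setminus R$. $R\subset S$ is $M$-crucial if $\mathrm{Supp}_R(S/R)=\{P\in\mathrm{Spec}(R)\mid R_P\neq S_P\}=\{M\}$. *)

theory Defs
  imports "HOL-Computational_Algebra.Polynomial"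
begin

text \<open>Rings are subrings (sets) of an ambient commutative ring type.\<close>

definition is_subring :: "'a::comm_ring_1 set \<Rightarrow> bool" where
  "is_subring T \<longleftrightarrow> 1 \<in> T \<and> (\<forall>a\<in>T. \<forall>b\<in>T. a + b \<in> T \<and> a - b \<in> T \<and> a * b \<in> T)"

definition is_ideal :: "'a::comm_ring_1 set \<Rightarrow> 'a set \<Rightarrow> bool" where
  "is_ideal R I \<longleftrightarrow> I \<subseteq> R \<and> 0 \<in> I \<and> (\<forall>a\<in>I. \<forall>b\<in>I. a + b \<in> I)
     \<and> (\<forall>r\<in>R. \<forall>a\<in>I. r * a \<in> I)"

definition prime_ideal :: "'a::comm_ring_1 set \<Rightarrow> 'a set \<Rightarrow> bool" where
  "prime_ideal R P \<longleftrightarrow> is_ideal R P \<and> P \<noteq> R \<and>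
     (\<forall>a\<in>R. \<forall>b\<in>R. a * b \<in> P \<longrightarrow> a \<in> P \<or> b \<in> P)"

definition Spec :: "'a::comm_ring_1 set \<Rightarrow> 'a set set" where
  "Spec R = {P. prime_ideal R P}"

definition maximal_ideal :: "'a::comm_ring_1 set \<Rightarrow> 'a set \<Rightarrow> bool" where
  "maximal_ideal R M \<longleftrightarrow> is_ideal R M \<and> M \<noteq> R \<and>
     (\<forall>J. is_ideal R J \<and> M \<subseteq> J \<longrightarrow> J = M \<or> J = R)"

definition Max_ideals :: "'a::comm_ring_1 set \<Rightarrow> 'a set set" where
  "Max_ideals R = {M. maximal_ideal R M}"

definition radical :: "'a::comm_ring_1 set \<Rightarrow> 'a set \<Rightarrow> 'a set" where
  "radical R I = {r \<in> R. \<exists>n. r ^ n \<in> I}"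

definition conductor :: "'a::comm_ring_1 set \<Rightarrow> 'a set \<Rightarrow> 'a set" where
  "conductor R T = {r \<in> R. \<forall>t\<in>T. r * t \<in> R}"

definition colon_elt :: "'a::comm_ring_1 set \<Rightarrow> 'a \<Rightarrow> 'a set" where
  "colon_elt R x = {r \<in> R. r * x \<in> R}"

definition ring_adj :: "'a::comm_ring_1 set \<Rightarrow> 'a \<Rightarrow> 'a set" where
  "ring_adj R x = \<Inter>{T. is_subring T \<and> insert x R \<subseteq> T}"

definition integral_ext :: "'a::comm_ring_1 set \<Rightarrow> 'a set \<Rightarrow> bool" where
  "integral_ext R S \<longleftrightarrow> (\<forall>s\<in>S. \<exists>p::'a poly. lead_coeff p = 1 \<and> (\<forall>i. coeff p i \<in> R) \<and> poly p s = 0)"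

definition intermediate_rings :: "'a::comm_ring_1 set \<Rightarrow> 'a set \<Rightarrow> 'a set set" where
  "intermediate_rings R S = {T. is_subring T \<and> R \<subseteq> T \<and> T \<subseteq> S}"

definition FCP :: "'a::comm_ring_1 set \<Rightarrow> 'a set \<Rightarrow> bool" where
  "FCP R S \<longleftrightarrow> (\<forall>C. C \<subseteq> intermediate_rings R S \<and> (\<forall>A\<in>C. \<forall>B\<in>C. A \<subseteq> B \<or> B \<subseteq> A)
      \<longrightarrow> finite C)"

text \<open>Localization at the multiplicative set R - P: elements of S_P are equivalence
  classes of pairs (s,u) with s in S, u in R - P, where (a,u) ~ (b,v) iff
  w (a v - b u) = 0 for some w in R - P.  R_P is the image of R \<times> (R - P)
  (canonically identified with the localization of R, since localization is exact).\<close>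
definition loc_class :: "'a::comm_ring_1 set \<Rightarrow> 'a set \<Rightarrow> 'a set \<Rightarrow> 'a \<times> 'a \<Rightarrow> ('a \<times> 'a) set" where
  "loc_class R P S au = {(b, v). b \<in> S \<and> v \<in> R - P \<and>
      (\<exists>w \<in> R - P. w * (fst au * v - b * snd au) = 0)}"

definition localize :: "'a::comm_ring_1 set \<Rightarrow> 'a set \<Rightarrow> 'a set \<Rightarrow> 'a set \<Rightarrow> ('a \<times> 'a) set set" where
  "localize R P S A = loc_class R P S ` (A \<times> (R - P))"

definition Supp :: "'a::comm_ring_1 set \<Rightarrow> 'a set \<Rightarrow> 'a set set" where
  "Supp R S = {P \<in> Spec R. localize R P S R \<noteq> localize R P S S}"

definition crucial :: "'a::comm_ring_1 set \<Rightarrow> 'a set \<Rightarrow> 'a set \<Rightarrow> bool" where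
  "crucial R S M \<longleftrightarrow> Supp R S = {M}"

definition critical_ideal :: "'a::comm_ring_1 set \<Rightarrow> 'a set \<Rightarrow> 'a set \<Rightarrow> bool" where
  "critical_ideal R S J \<longleftrightarrow> is_ideal R J \<and> (\<forall>x \<in> S - R. J = radical R (colon_elt R x))"

end

theory Submission
  imports Defs
begin

(*
  A prime P of R lies in Supp(S/R) iff (R : s) \<subseteq> P for some s in S.

  If J is critical, every prime of the support contains (R : s) for some s in S - R, hence
  J = rad(R : s), and J itself lies in the support. J is maximal: given a \<notin> J in an ideal
  K \<supseteq> J and x in S - R, the rings R + a^k R[x] form a descending chain, which stabilizes by
  FCP; a relative Nakayama argument on the finitely generated R-module a^k R[x] then gives i in K
  with (1 + i) a^k x in R. Since a^k x \<notin> R, we get 1 + i \<in> (R : a^k x) \<subseteq> J \<subseteq> K, so K = R.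

  Conversely, if Supp(S/R) = {M}, any prime containing (R : x) is M, so rad(R : x) \<subseteq> M. A prime
  P not containing M is outside the support, so every power x^j has a multiplier in R - P taking
  it into R; the product of these multipliers for j below the degree of a monic equation of x
  lies in (R : R[x]) but not in P. Hence M \<subseteq> rad(R : R[x]) \<subseteq> rad(R : x).
*)


lemma subring_one: "is_subring R \<Longrightarrow> 1 \<in> R"
  by (simp add: is_subring_def)

lemma subring_add: "is_subring R \<Longrightarrow> a \<in> R \<Longrightarrow> b \<in> R \<Longrightarrow> a + b \<in> R"
  by (simp add: is_subring_def)

lemma subring_diff: "is_subring R \<Longrightarrow> a \<in> R \<Longrightarrow> b \<in> R \<Longrightarrow> a - b \<in> R"
  by (simp add: is_subring_def)

lemma subring_mult: "is_subring R \<Longrightarrow> a \<in> R \<Longrightarrow> b \<in> R \<Longrightarrow> a * b \<in> R"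
  by (simp add: is_subring_def)

lemma subring_zero: "is_subring R \<Longrightarrow> 0 \<in> R"
  using subring_diff[of R 1 1] subring_one by fastforce

lemma subring_minus: "is_subring R \<Longrightarrow> a \<in> R \<Longrightarrow> - a \<in> R"
  using subring_diff[of R 0 a] subring_zero by fastforce

lemma subring_power: "is_subring R \<Longrightarrow> a \<in> R \<Longrightarrow> a ^ n \<in> R"
  by (induct n) (auto simp: subring_one subring_mult)

lemma subring_sum: "is_subring R \<Longrightarrow> (\<And>i. i \<in> A \<Longrightarrow> f i \<in> R) \<Longrightarrow> sum f A \<in> R"
  by (induct A rule: infinite_finite_induct) (auto simp: subring_zero subring_add)

lemma ideal_subset: "is_ideal R I \<Longrightarrow> I \<subseteq> R"
  by (simp add: is_ideal_def)

lemma ideal_zero: "is_ideal R I \<Longrightarrow> 0 \<in> I"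
  by (simp add: is_ideal_def)

lemma ideal_add: "is_ideal R I \<Longrightarrow> a \<in> I \<Longrightarrow> b \<in> I \<Longrightarrow> a + b \<in> I"
  by (simp add: is_ideal_def)

lemma ideal_mult_left: "is_ideal R I \<Longrightarrow> r \<in> R \<Longrightarrow> a \<in> I \<Longrightarrow> r * a \<in> I"
  by (simp add: is_ideal_def)

lemma ideal_mult_right: "is_ideal R I \<Longrightarrow> r \<in> R \<Longrightarrow> a \<in> I \<Longrightarrow> a * r \<in> I"
  using ideal_mult_left[of R I r a] by (simp add: mult.commute)

lemma ideal_diff:
  assumes "is_subring R" "is_ideal R I" "a \<in> I" "b \<in> I"
  shows "a - b \<in> I"
proof -
  have "(- 1) * b \<in> I"
    using ideal_mult_left[OF assms(2) subring_minus[OF assms(1) subring_one[OF assms(1)]] assms(4)] .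
  then show ?thesis
    using ideal_add[OF assms(2,3)] by fastforce
qed

lemma ideal_one_plus_mult:
  assumes "is_ideal R I" "i \<in> I" "j \<in> I"
  shows "\<exists>k\<in>I. (1 + i) * (1 + j) = 1 + k"
proof
  show "i + j + i * j \<in> I"
    using assms by (meson ideal_add ideal_mult_left ideal_subset subsetD)
qed (simp add: algebra_simps)

lemma ideal_eq_if_one_mem: "is_subring R \<Longrightarrow> is_ideal R I \<Longrightarrow> 1 \<in> I \<Longrightarrow> I = R"
  using ideal_mult_right[of R I _ 1] ideal_subset[of R I] by fastforce

lemma colon_elt_ideal: "is_subring R \<Longrightarrow> is_ideal R (colon_elt R x)"
  unfolding is_ideal_def colon_elt_def
  by (auto simp: distrib_right mult.assoc intro: subring_add subring_mult subring_zero)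

lemma conductor_ideal: "is_subring R \<Longrightarrow> is_ideal R (conductor R T)"
  unfolding is_ideal_def conductor_def
  by (auto simp: distrib_right mult.assoc intro: subring_add subring_mult subring_zero)

lemma conductor_subset_colon_elt: "x \<in> T \<Longrightarrow> conductor R T \<subseteq> colon_elt R x"
  by (auto simp: conductor_def colon_elt_def)

lemma subset_radical: "I \<subseteq> R \<Longrightarrow> I \<subseteq> radical R I"
  unfolding radical_def by (auto intro: exI[of _ 1])

lemma radical_mono: "I \<subseteq> J \<Longrightarrow> radical R I \<subseteq> radical R J"
  unfolding radical_def by auto

section \<open>Prime and maximal ideals\<close>

lemma prime_ideal_is_ideal: "prime_ideal R P \<Longrightarrow> is_ideal R P"
  by (simp add: prime_ideal_def)

lemma prime_ideal_one_notin: "is_subring R \<Longrightarrow> prime_ideal R P \<Longrightarrow> 1 \<notin> P"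
  using ideal_eq_if_one_mem unfolding prime_ideal_def by blast

lemma prime_ideal_mult_notin:
  "is_subring R \<Longrightarrow> prime_ideal R P \<Longrightarrow> a \<in> R - P \<Longrightarrow> b \<in> R - P \<Longrightarrow> a * b \<in> R - P"
  unfolding prime_ideal_def using subring_mult by blast

lemma prime_ideal_power_mem:
  assumes R: "is_subring R" and P: "prime_ideal R P" and r: "r \<in> R"
  shows "r ^ n \<in> P \<Longrightarrow> r \<in> P"
proof (induct n)
  case 0
  then show ?case using prime_ideal_one_notin[OF R P] by simp
next
  case (Suc n)
  then show ?case using P r subring_power[OF R r, of n] unfolding prime_ideal_def by auto
qed

lemma radical_subset_prime_ideal:
  "is_subring R \<Longrightarrow> prime_ideal R P \<Longrightarrow> I \<subseteq> P \<Longrightarrow> radical R I \<subseteq> P"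
  unfolding radical_def using prime_ideal_power_mem by blast

lemma common_denominator:
  fixes g :: "nat \<Rightarrow> 'a::comm_ring_1"
  assumes R: "is_subring R" and P: "prime_ideal R P"
  shows "(\<forall>j<n. \<exists>v\<in>R - P. v * g j \<in> R) \<Longrightarrow> \<exists>e\<in>R - P. \<forall>j<n. e * g j \<in> R"
proof (induct n)
  case 0
  then show ?case
    using prime_ideal_one_notin[OF R P] subring_one[OF R] by blast
next
  case (Suc n)
  then obtain e where e: "e \<in> R - P" "\<forall>j<n. e * g j \<in> R"
    by auto
  obtain v where v: "v \<in> R - P" "v * g n \<in> R"
    using Suc.prems by auto
  have "(v * e) * g j \<in> R" if "j < Suc n" for j
  proof (cases "j = n")
    case True
    then show ?thesis
      using e(1) v subring_mult[OF R, of e "v * g n"] by (simp add: ac_simps)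
  next
    case False
    then show ?thesis
      using that e v(1) subring_mult[OF R, of v "e * g j"] by (simp add: mult.assoc)
  qed
  then show ?case
    using prime_ideal_mult_notin[OF R P v(1) e(1)] by blast
qed

definition ideal_adjoin :: "'a::comm_ring_1 set \<Rightarrow> 'a set \<Rightarrow> 'a \<Rightarrow> 'a set" where
  "ideal_adjoin R I a = {m + r * a | m r. m \<in> I \<and> r \<in> R}"

lemma ideal_adjoin:
  assumes R: "is_subring R" and I: "is_ideal R I" and a: "a \<in> R"
  shows "is_ideal R (ideal_adjoin R I a)" "I \<subseteq> ideal_adjoin R I a" "a \<in> ideal_adjoin R I a"
proof -
  have mem: "m + r * a \<in> ideal_adjoin R I a" if "m \<in> I" "r \<in> R" for m r
    using that unfolding ideal_adjoin_def by blast
  have "p + q \<in> ideal_adjoin R I a" if p: "p \<in> ideal_adjoin R I a" and q: "q \<in> ideal_adjoin R I a" for p q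
  proof -
    obtain m r where "p = m + r * a" "m \<in> I" "r \<in> R"
      using p unfolding ideal_adjoin_def by blast
    moreover obtain m' r' where "q = m' + r' * a" "m' \<in> I" "r' \<in> R"
      using q unfolding ideal_adjoin_def by blast
    ultimately show ?thesis
      using mem[OF ideal_add[OF I] subring_add[OF R], of m m' r r'] by (simp add: algebra_simps)
  qed
  moreover have "s * p \<in> ideal_adjoin R I a" if s: "s \<in> R" and p: "p \<in> ideal_adjoin R I a" for s p
  proof -
    obtain m r where "p = m + r * a" "m \<in> I" "r \<in> R"
      using p unfolding ideal_adjoin_def by blast
    then show ?thesis
      using mem[OF ideal_mult_left[OF I s] subring_mult[OF R s], of m r]
      by (simp add: algebra_simps)
  qed
  moreover have "ideal_adjoin R I a \<subseteq> R"
    using R a ideal_subset[OF I] unfolding ideal_adjoin_def by (auto intro: subring_add subring_mult)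
  moreover have "I \<subseteq> ideal_adjoin R I a"
    using mem[OF _ subring_zero[OF R]] by auto
  ultimately show "is_ideal R (ideal_adjoin R I a)" "I \<subseteq> ideal_adjoin R I a"
    using ideal_zero[OF I] unfolding is_ideal_def by blast+
  show "a \<in> ideal_adjoin R I a"
    using mem[OF ideal_zero[OF I] subring_one[OF R]] by simp
qed

lemma maximal_ideal_imp_prime_ideal:
  assumes R: "is_subring R" and M: "maximal_ideal R M"
  shows "prime_ideal R M"
proof -
  have Mi: "is_ideal R M" and MR: "M \<noteq> R"
    using M by (auto simp: maximal_ideal_def)
  have "a \<in> M \<or> b \<in> M" if a: "a \<in> R" and b: "b \<in> R" and ab: "a * b \<in> M" for a b
  proof (rule disjCI)
    assume "b \<notin> M"
    with M ideal_adjoin[OF R Mi b] have "ideal_adjoin R M b = R"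
      unfolding maximal_ideal_def by blast
    then have "1 \<in> ideal_adjoin R M b"
      using subring_one[OF R] by simp
    then obtain m r where mr: "1 = m + r * b" "m \<in> M" "r \<in> R"
      unfolding ideal_adjoin_def by blast
    have "a = a * (m + r * b)"
      using mr(1) by simp
    also have "\<dots> = a * m + r * (a * b)"
      by (simp add: algebra_simps)
    also have "\<dots> \<in> M"
      using ideal_add[OF Mi ideal_mult_left[OF Mi a mr(2)] ideal_mult_left[OF Mi mr(3) ab]] .
    finally show "a \<in> M" .
  qed
  then show ?thesis
    using Mi MR by (simp add: prime_ideal_def)
qed

lemma ideal_Union_chain:
  assumes "C \<noteq> {}" "\<forall>I\<in>C. is_ideal R I" "\<forall>I\<in>C. \<forall>J\<in>C. I \<subseteq> J \<or> J \<subseteq> I"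
  shows "is_ideal R (\<Union>C)"
proof -
  have "a + b \<in> \<Union>C" if ab: "a \<in> \<Union>C" "b \<in> \<Union>C" for a b
  proof -
    obtain I J where IJ: "I \<in> C" "J \<in> C" and "a \<in> I" "b \<in> J"
      using ab by blast
    moreover have "I \<subseteq> J \<or> J \<subseteq> I"
      using assms(3) IJ by blast
    ultimately obtain K where "K \<in> C" "a \<in> K" "b \<in> K"
      using IJ by blast
    then show ?thesis
      using ideal_add[of R K a b] assms(2) by blast
  qed
  moreover have "r * a \<in> \<Union>C" if "r \<in> R" "a \<in> \<Union>C" for r a
    using that assms(2) ideal_mult_left by blast
  moreover have "\<Union>C \<subseteq> R" and "0 \<in> \<Union>C"
    using assms(1,2) ideal_subset ideal_zero by fastforce+
  ultimately show ?thesis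
    unfolding is_ideal_def by blast
qed

lemma prime_ideal_if_adjoin_meets_powers:
  assumes R: "is_subring R" and P: "is_ideal R P" and s: "s \<in> R" and powers: "\<forall>n. s ^ n \<notin> P"
    and adjoin: "\<And>a. a \<in> R - P \<Longrightarrow> \<exists>n. s ^ n \<in> ideal_adjoin R P a"
  shows "prime_ideal R P"
proof -
  have "a \<in> P \<or> b \<in> P" if a: "a \<in> R" and b: "b \<in> R" and ab: "a * b \<in> P" for a b
  proof (rule ccontr)
    assume "\<not> (a \<in> P \<or> b \<in> P)"
    then obtain n l where "s ^ n \<in> ideal_adjoin R P a" "s ^ l \<in> ideal_adjoin R P b"
      using adjoin a b by blast
    then obtain m1 r1 m2 r2 where
      1: "s ^ n = m1 + r1 * a" "m1 \<in> P" "r1 \<in> R" and 2: "s ^ l = m2 + r2 * b" "m2 \<in> P" "r2 \<in> R"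
      unfolding ideal_adjoin_def by blast
    have R_mem: "m2 + r2 * b \<in> R" "r1 * a \<in> R" "r1 * r2 \<in> R"
      using 1 2 a b R ideal_subset[OF P] by (auto intro: subring_add subring_mult)
    have "s ^ (n + l) = m1 * (m2 + r2 * b) + m2 * (r1 * a) + (r1 * r2) * (a * b)"
      by (simp add: power_add 1 2 algebra_simps)
    also have "\<dots> \<in> P"
      using ideal_add[OF P ideal_add[OF P ideal_mult_right[OF P R_mem(1) 1(2)]
          ideal_mult_right[OF P R_mem(2) 2(2)]] ideal_mult_left[OF P R_mem(3) ab]] .
    finally show False
      using powers by blast
  qed
  moreover have "s \<notin> P"
    using powers[rule_format, of 1] by simp
  ultimately show ?thesis
    using P s by (auto simp: prime_ideal_def)
qed

lemma exists_prime_ideal_avoiding_powers: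
  assumes R: "is_subring R" and I: "is_ideal R I" and s: "s \<in> R" and powers: "\<forall>n. s ^ n \<notin> I"
  shows "\<exists>P. prime_ideal R P \<and> I \<subseteq> P \<and> s \<notin> P"
proof -
  define F where "F = {K. is_ideal R K \<and> I \<subseteq> K \<and> (\<forall>n. s ^ n \<notin> K)}"
  have "\<exists>U\<in>F. \<forall>K\<in>C. K \<subseteq> U" if "C \<in> chains F" for C
  proof (cases "C = {}")
    case True
    then show ?thesis using I powers by (auto simp: F_def)
  next
    case False
    with that have "\<Union>C \<in> F"
      using ideal_Union_chain[of C R] unfolding F_def chains_def chain_subset_def by blast
    then show ?thesis by blast
  qed
  then obtain P where P: "P \<in> F" and P_max: "\<forall>K\<in>F. P \<subseteq> K \<longrightarrow> K = P"
    using Zorn_Lemma2[of F] by blast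
  have Pi: "is_ideal R P" and IP: "I \<subseteq> P" and P_powers: "\<forall>n. s ^ n \<notin> P"
    using P by (auto simp: F_def)
  have "\<exists>n. s ^ n \<in> ideal_adjoin R P a" if "a \<in> R - P" for a
    using ideal_adjoin[OF R Pi, of a] P_max IP that unfolding F_def by blast
  then have "prime_ideal R P"
    using prime_ideal_if_adjoin_meets_powers[OF R Pi s P_powers] by blast
  with IP P_powers[rule_format, of 1] show ?thesis
    by auto
qed

section \<open>The support of \<open>S/R\<close> through colon ideals\<close>

lemma loc_class_subset:
  assumes R: "is_subring R" and P: "prime_ideal R P" and u: "u \<in> R - P" and w: "w \<in> R - P"
    and eq: "w * (a * v - b * u) = 0"
  shows "loc_class R P S (a, u) \<subseteq> loc_class R P S (b, v)"
proof
  fix z assume "z \<in> loc_class R P S (a, u)"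
  then obtain c t w' where z: "z = (c, t)" "c \<in> S" "t \<in> R - P" "w' \<in> R - P"
    and eq': "w' * (a * t - c * u) = 0"
    by (cases z) (auto simp: loc_class_def)
  have "w * w' * u * (b * t - c * v) = w * v * (w' * (a * t - c * u)) - w' * t * (w * (a * v - b * u))"
    by (simp add: algebra_simps)
  also have "\<dots> = 0"
    using eq eq' by simp
  finally show "z \<in> loc_class R P S (b, v)"
    using z prime_ideal_mult_notin[OF R P prime_ideal_mult_notin[OF R P w z(4)] u]
    by (auto simp: loc_class_def)
qed

lemma loc_class_eq:
  assumes R: "is_subring R" and P: "prime_ideal R P" and u: "u \<in> R - P" and v: "v \<in> R - P"
    and w: "w \<in> R - P" and eq: "w * (a * v - b * u) = 0"
  shows "loc_class R P S (a, u) = loc_class R P S (b, v)"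
proof
  show "loc_class R P S (a, u) \<subseteq> loc_class R P S (b, v)"
    using loc_class_subset[OF R P u w eq] .
  have "w * (b * u - a * v) = 0"
    using eq by (simp add: algebra_simps)
  then show "loc_class R P S (b, v) \<subseteq> loc_class R P S (a, u)"
    using loc_class_subset[OF R P v w] by blast
qed

lemma Supp_imp_colon_elt_subset:
  assumes R: "is_subring R" and RS: "R \<subseteq> S" and "P \<in> Supp R S"
  shows "\<exists>s\<in>S. colon_elt R s \<subseteq> P"
proof -
  have P: "prime_ideal R P" and ne: "localize R P S R \<noteq> localize R P S S"
    using assms(3) by (auto simp: Supp_def Spec_def)
  have "localize R P S R \<subseteq> localize R P S S"
    using RS by (auto simp: localize_def)
  with ne obtain s v where s: "s \<in> S" "v \<in> R - P"
    and not_local: "loc_class R P S (s, v) \<notin> localize R P S R"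
    by (auto simp: localize_def)
  have "b \<in> P" if b: "b \<in> colon_elt R s" for b
  proof (rule ccontr)
    assume "b \<notin> P"
    then have bv: "b * v \<in> R - P"
      using b s(2) prime_ideal_mult_notin[OF R P] by (auto simp: colon_elt_def)
    have "1 * (s * (b * v) - (b * s) * v) = 0"
      by (simp add: algebra_simps)
    then have "loc_class R P S (s, v) = loc_class R P S (b * s, b * v)"
      using loc_class_eq[OF R P s(2) bv] prime_ideal_one_notin[OF R P] subring_one[OF R] by blast
    with b bv not_local show False
      by (auto simp: localize_def colon_elt_def)
  qed
  with s(1) show ?thesis
    by blast
qed

lemma colon_elt_subset_imp_Supp:
  assumes R: "is_subring R" and P: "prime_ideal R P" and s: "s \<in> S" and colon: "colon_elt R s \<subseteq> P"
  shows "P \<in> Supp R S"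
proof -
  have one: "1 \<in> R - P"
    using prime_ideal_one_notin[OF R P] subring_one[OF R] by blast
  have "loc_class R P S (s, 1) \<notin> localize R P S R"
  proof
    assume "loc_class R P S (s, 1) \<in> localize R P S R"
    then obtain r u where ru: "r \<in> R" "u \<in> R - P" "loc_class R P S (s, 1) = loc_class R P S (r, u)"
      by (auto simp: localize_def)
    moreover have "(s, 1) \<in> loc_class R P S (s, 1)"
      using s one by (auto simp: loc_class_def)
    ultimately obtain w where w: "w \<in> R - P" "w * (r - s * u) = 0"
      by (auto simp: loc_class_def)
    then have "(w * u) * s = w * r"
      by (simp add: algebra_simps)
    then have "w * u \<in> colon_elt R s"
      using w ru subring_mult[OF R] by (auto simp: colon_elt_def)
    then show False
      using colon prime_ideal_mult_notin[OF R P w(1) ru(2)] by blast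
  qed
  moreover have "loc_class R P S (s, 1) \<in> localize R P S S"
    using s one by (auto simp: localize_def)
  ultimately show ?thesis
    using P by (auto simp: Supp_def Spec_def)
qed

lemma Supp_iff_colon_elt:
  assumes "is_subring R" and "R \<subseteq> S"
  shows "P \<in> Supp R S \<longleftrightarrow> prime_ideal R P \<and> (\<exists>s\<in>S. colon_elt R s \<subseteq> P)"
  using Supp_imp_colon_elt_subset[OF assms] colon_elt_subset_imp_Supp[OF assms(1)]
  by (auto simp: Supp_def Spec_def)

section \<open>Finite linear combinations and a relative Nakayama lemma\<close>

definition lin_combs :: "'a::comm_ring_1 set \<Rightarrow> (nat \<Rightarrow> 'a) \<Rightarrow> nat \<Rightarrow> 'a set" where
  "lin_combs C g n = {\<Sum>j<n. c j * g j | c. \<forall>j<n. c j \<in> C}"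

lemma lin_combs_SucE:
  assumes "m \<in> lin_combs C g (Suc n)"
  obtains m' k where "m = m' + k * g n" "m' \<in> lin_combs C g n" "k \<in> C"
proof -
  obtain c where "m = (\<Sum>j<Suc n. c j * g j)" "\<forall>j<Suc n. c j \<in> C"
    using assms unfolding lin_combs_def by blast
  moreover have "(\<Sum>j<n. c j * g j) \<in> lin_combs C g n"
    using \<open>\<forall>j<Suc n. c j \<in> C\<close> unfolding lin_combs_def by auto
  ultimately show thesis
    using that[of "\<Sum>j<n. c j * g j" "c n"] by simp
qed

lemma lin_combs_add:
  assumes "\<And>c c'. c \<in> C \<Longrightarrow> c' \<in> C \<Longrightarrow> c + c' \<in> C"
    and "m \<in> lin_combs C g n" "m' \<in> lin_combs C g n"
  shows "m + m' \<in> lin_combs C g n"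
proof -
  obtain c c' where "m = (\<Sum>j<n. c j * g j)" "m' = (\<Sum>j<n. c' j * g j)"
    "\<forall>j<n. c j \<in> C" "\<forall>j<n. c' j \<in> C"
    using assms(2,3) unfolding lin_combs_def by blast
  then show ?thesis
    using assms(1) unfolding lin_combs_def
    by (auto intro!: exI[of _ "\<lambda>j. c j + c' j"] simp: sum.distrib distrib_right)
qed

lemma lin_combs_mult:
  assumes "\<And>c. c \<in> C \<Longrightarrow> r * c \<in> C'" and "m \<in> lin_combs C g n"
  shows "r * m \<in> lin_combs C' g n"
proof -
  obtain c where "m = (\<Sum>j<n. c j * g j)" "\<forall>j<n. c j \<in> C"
    using assms(2) unfolding lin_combs_def by blast
  then show ?thesis
    using assms(1) unfolding lin_combs_def
    by (auto intro!: exI[of _ "\<lambda>j. r * c j"] simp: sum_distrib_left mult.assoc)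
qed

lemma lin_combs_scale_generators:
  assumes "m \<in> lin_combs C g n"
  shows "u * m \<in> lin_combs C (\<lambda>j. u * g j) n"
proof -
  obtain c where "m = (\<Sum>j<n. c j * g j)" "\<forall>j<n. c j \<in> C"
    using assms unfolding lin_combs_def by blast
  then show ?thesis
    unfolding lin_combs_def by (auto simp: sum_distrib_left mult.left_commute)
qed

lemma mult_lin_combs_mem:
  assumes R: "is_subring R" and "C \<subseteq> R" and "\<forall>j<n. s * g j \<in> R" and "m \<in> lin_combs C g n"
  shows "s * m \<in> R"
proof -
  obtain c where "m = (\<Sum>j<n. c j * g j)" "\<forall>j<n. c j \<in> C"
    using assms(4) unfolding lin_combs_def by blast
  then have "s * m = (\<Sum>j<n. c j * (s * g j))"
    by (simp add: sum_distrib_left mult.left_commute)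
  also have "\<dots> \<in> R"
    using assms(2,3) \<open>\<forall>j<n. c j \<in> C\<close> subring_mult[OF R] by (auto intro!: subring_sum[OF R])
  finally show ?thesis .
qed

lemma lin_combs_zero: "0 \<in> C \<Longrightarrow> 0 \<in> lin_combs C g n"
  unfolding lin_combs_def by (auto intro!: exI[of _ "\<lambda>_. 0"])

lemma lin_combs_generator:
  assumes "0 \<in> C" "1 \<in> C" "j < n"
  shows "g j \<in> lin_combs C g n"
proof -
  have "(\<Sum>k<n. (if k = j then 1 else 0) * g k) = (\<Sum>k<n. if k = j then g k else 0)"
    by (rule sum.cong) auto
  then have "g j = (\<Sum>k<n. (if k = j then 1 else 0) * g k)"
    using assms(3) by simp
  then show ?thesis
    using assms(1,2) unfolding lin_combs_def by (auto intro!: exI[of _ "\<lambda>k. if k = j then 1 else 0"])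
qed

lemma lin_combs_sum:
  assumes "0 \<in> C" "\<And>c c'. c \<in> C \<Longrightarrow> c' \<in> C \<Longrightarrow> c + c' \<in> C"
    and "\<And>a. a \<in> A \<Longrightarrow> f a \<in> lin_combs C g n"
  shows "sum f A \<in> lin_combs C g n"
  using assms(3)
  by (induct A rule: infinite_finite_induct) (auto simp: lin_combs_zero[OF assms(1)] lin_combs_add[OF assms(2)])

lemma nakayama_eliminate_last:
  assumes R: "is_subring R" and I: "is_ideal R I"
    and last: "(1 + i\<^sub>0) * g n = r\<^sub>0 + m\<^sub>0" "i\<^sub>0 \<in> I" "r\<^sub>0 \<in> R" "m\<^sub>0 \<in> lin_combs I g n"
    and y: "(1 + i) * y = r + m" "i \<in> I" "r \<in> R" "m \<in> lin_combs I g (Suc n)"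
  shows "\<exists>i'\<in>I. \<exists>r'\<in>R. \<exists>m'\<in>lin_combs I g n. (1 + i') * y = r' + m'"
proof -
  obtain m' k where m': "m = m' + k * g n" "m' \<in> lin_combs I g n" "k \<in> I"
    using y(4) by (rule lin_combs_SucE)
  obtain i' where i': "i' \<in> I" "(1 + i\<^sub>0) * (1 + i) = 1 + i'"
    using ideal_one_plus_mult[OF I last(2) y(2)] by blast
  have I_sub: "I \<subseteq> R"
    using ideal_subset[OF I] .
  have "(1 + i') * y = (1 + i\<^sub>0) * ((1 + i) * y)"
    by (simp add: i'(2)[symmetric] mult.assoc)
  also have "\<dots> = ((1 + i\<^sub>0) * r + k * r\<^sub>0) + ((1 + i\<^sub>0) * m' + k * m\<^sub>0)"
    unfolding y(1) m'(1) using last(1) by (simp add: algebra_simps)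
  finally have "(1 + i') * y = ((1 + i\<^sub>0) * r + k * r\<^sub>0) + ((1 + i\<^sub>0) * m' + k * m\<^sub>0)" .
  moreover have "(1 + i\<^sub>0) * r + k * r\<^sub>0 \<in> R"
    using R I_sub last(2,3) y(3) m'(3) by (blast intro: subring_add subring_mult subring_one)
  moreover have "(1 + i\<^sub>0) * m' + k * m\<^sub>0 \<in> lin_combs I g n"
    using R I last(2,4) m'(2,3) I_sub
    by (blast intro: lin_combs_add lin_combs_mult ideal_add ideal_mult_left subring_add subring_one)
  ultimately show ?thesis
    using i'(1) by blast
qed

text \<open>The multipliers \<open>1 + i\<close> in the hypothesis make the induction on \<open>n\<close> go through:
  eliminating the last generator costs one more such factor.\<close>

lemma relative_nakayama:
  assumes R: "is_subring R" and I: "is_ideal R I"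
  shows "(\<forall>j<n. \<exists>i\<in>I. \<exists>r\<in>R. \<exists>m\<in>lin_combs I g n. (1 + i) * g j = r + m)
    \<Longrightarrow> \<exists>i\<in>I. \<forall>j<n. (1 + i) * g j \<in> R"
proof (induct n)
  case 0
  then show ?case using ideal_zero[OF I] by blast
next
  case (Suc n)
  obtain i r m\<^sub>0 k where "(1 + i) * g n = r + m\<^sub>0 + k * g n"
    and last: "i \<in> I" "r \<in> R" "m\<^sub>0 \<in> lin_combs I g n" "k \<in> I"
    using Suc.prems[rule_format, of n] by (auto elim!: lin_combs_SucE simp: add.assoc)
  then have last_eq: "(1 + (i - k)) * g n = r + m\<^sub>0"
    by (simp add: algebra_simps)
  have i_k: "i - k \<in> I"
    using ideal_diff[OF R I last(1,4)] .
  have "\<forall>j<n. \<exists>i\<in>I. \<exists>r\<in>R. \<exists>m\<in>lin_combs I g n. (1 + i) * g j = r + m"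
    using Suc.prems nakayama_eliminate_last[OF R I last_eq i_k last(2,3)] by (meson less_SucI)
  then obtain i' where i': "i' \<in> I" "\<forall>j<n. (1 + i') * g j \<in> R"
    using Suc.hyps by blast
  obtain i'' where i'': "i'' \<in> I" "(1 + i') * (1 + (i - k)) = 1 + i''"
    using ideal_one_plus_mult[OF I i'(1) i_k] by blast
  have I_sub: "I \<subseteq> R"
    using ideal_subset[OF I] .
  have "(1 + i'') * g j \<in> R" if "j < Suc n" for j
  proof (cases "j = n")
    case True
    have "(1 + i'') * g n = (1 + i') * ((1 + (i - k)) * g n)"
      by (simp only: i''(2)[symmetric] mult.assoc)
    also have "\<dots> = (1 + i') * r + (1 + i') * m\<^sub>0"
      by (simp only: last_eq distrib_left)
    finally have "(1 + i'') * g n = (1 + i') * r + (1 + i') * m\<^sub>0" .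
    moreover have "(1 + i') * m\<^sub>0 \<in> R"
      using mult_lin_combs_mem[OF R I_sub i'(2) last(3)] .
    ultimately show ?thesis
      using True R I_sub i'(1) last(2) by (metis subring_add subring_mult subring_one subsetD)
  next
    case False
    then have "(1 + i'') * g j = (1 + (i - k)) * ((1 + i') * g j)"
      by (simp add: i''(2)[symmetric] ac_simps)
    then show ?thesis
      using False that R I_sub i' i_k by (metis less_SucE subring_add subring_mult subring_one subsetD)
  qed
  with i''(1) show ?case by blast
qed

section \<open>Integral FCP extensions\<close>

lemma ring_adj_least: "is_subring T \<Longrightarrow> insert x R \<subseteq> T \<Longrightarrow> ring_adj R x \<subseteq> T"
  by (auto simp: ring_adj_def)

lemma ring_adj_contains: "insert x R \<subseteq> ring_adj R x"
  by (auto simp: ring_adj_def)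

lemma ring_adj_subring: "is_subring (ring_adj R x)"
  by (auto simp: is_subring_def ring_adj_def)

lemma monic_root_power_degree:
  fixes p :: "'a::comm_ring_1 poly"
  assumes "lead_coeff p = 1" "poly p x = 0"
  shows "x ^ degree p = (\<Sum>i<degree p. (- coeff p i) * x ^ i)"
proof -
  have "0 = (\<Sum>i\<le>degree p. coeff p i * x ^ i)"
    using assms(2) by (simp add: poly_altdef)
  also have "\<dots> = (\<Sum>i<degree p. coeff p i * x ^ i) + x ^ degree p"
    using assms(1) by (simp add: lessThan_Suc_atMost[symmetric])
  finally show ?thesis
    by (simp add: sum_negf eq_neg_iff_add_eq_0 add.commute)
qed

lemma lin_combs_powers_mult_root:
  assumes R: "is_subring R" and p: "lead_coeff p = 1" "\<forall>i. coeff p i \<in> R" "poly p x = 0"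
    and m: "m \<in> lin_combs R (\<lambda>j. x ^ j) (degree p)"
  shows "x * m \<in> lin_combs R (\<lambda>j. x ^ j) (degree p)"
proof -
  define G where "G = lin_combs R (\<lambda>j. x ^ j) (degree p)"
  have scal: "r * m \<in> G" if "r \<in> R" "m \<in> G" for r m
    using that lin_combs_mult[OF subring_mult[OF R]] unfolding G_def by blast
  have sum: "sum f A \<in> G" if "\<And>a. a \<in> A \<Longrightarrow> f a \<in> G" for f and A :: "nat set"
    using that lin_combs_sum[OF subring_zero[OF R] subring_add[OF R]] unfolding G_def by blast
  have low_powers: "x ^ j \<in> G" if "j < degree p" for j
    using that lin_combs_generator[OF subring_zero[OF R] subring_one[OF R]] unfolding G_def by blast
  have top_power: "x ^ degree p \<in> G"
    unfolding monic_root_power_degree[OF p(1,3)]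
    using low_powers p(2) subring_minus[OF R] by (intro sum scal) auto
  obtain c where c: "m = (\<Sum>j<degree p. c j * x ^ j)" "\<forall>j<degree p. c j \<in> R"
    using m unfolding lin_combs_def by blast
  have "x * m = (\<Sum>j<degree p. c j * x ^ Suc j)"
    unfolding c(1) by (simp add: sum_distrib_left mult.left_commute)
  also have "\<dots> \<in> G"
  proof (rule sum)
    fix j assume j: "j \<in> {..<degree p}"
    then have "x ^ Suc j \<in> G"
      using low_powers[of "Suc j"] top_power by (cases "Suc j = degree p") auto
    then show "c j * x ^ Suc j \<in> G"
      using scal c(2) j by blast
  qed
  finally show ?thesis
    unfolding G_def .
qed

lemma lin_combs_powers_subring:
  assumes R: "is_subring R" and p: "lead_coeff p = 1" "\<forall>i. coeff p i \<in> R" "poly p x = 0"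
  shows "is_subring (lin_combs R (\<lambda>j. x ^ j) (degree p))"
proof -
  define G where "G = lin_combs R (\<lambda>j. x ^ j) (degree p)"
  have add: "m + m' \<in> G" if "m \<in> G" "m' \<in> G" for m m'
    using that lin_combs_add[OF subring_add[OF R]] unfolding G_def by blast
  have scal: "r * m \<in> G" if "r \<in> R" "m \<in> G" for r m
    using that lin_combs_mult[OF subring_mult[OF R]] unfolding G_def by blast
  have power_mult: "x ^ j * m \<in> G" if "m \<in> G" for j m
    using that lin_combs_powers_mult_root[OF R p] unfolding G_def by (induct j) (auto simp: mult.assoc)
  have mult: "m * m' \<in> G" if m: "m \<in> G" and m': "m' \<in> G" for m m'
  proof -
    obtain c where c: "m = (\<Sum>j<degree p. c j * x ^ j)" "\<forall>j<degree p. c j \<in> R"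
      using m unfolding G_def lin_combs_def by blast
    have "m * m' = (\<Sum>j<degree p. c j * (x ^ j * m'))"
      unfolding c(1) by (simp add: sum_distrib_right mult.assoc)
    also have "\<dots> \<in> G"
      unfolding G_def
    proof (rule lin_combs_sum[OF subring_zero[OF R] subring_add[OF R]])
      show "c j * (x ^ j * m') \<in> lin_combs R (\<lambda>j. x ^ j) (degree p)" if "j \<in> {..<degree p}" for j
        using that c(2) scal power_mult[OF m'] unfolding G_def by simp
    qed
    finally show ?thesis .
  qed
  have "degree p \<noteq> 0"
  proof
    assume "degree p = 0"
    then have "p = [:1:]"
      using p(1) by (metis degree_0_id)
    then show False
      using p(3) by simp
  qed
  then have one: "1 \<in> G"
    using lin_combs_generator[OF subring_zero[OF R] subring_one[OF R], of 0 "degree p" "\<lambda>j. x ^ j"]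
    unfolding G_def by simp
  show ?thesis
    unfolding G_def[symmetric] is_subring_def
    using one add mult scal[OF subring_minus[OF R subring_one[OF R]]] by (metis diff_conv_add_uminus mult_minus1)
qed

lemma ring_adj_subset_lin_combs_powers:
  assumes R: "is_subring R" and p: "lead_coeff p = 1" "\<forall>i. coeff p i \<in> R" "poly p x = 0"
  shows "ring_adj R x \<subseteq> lin_combs R (\<lambda>j. x ^ j) (degree p)"
proof (rule ring_adj_least[OF lin_combs_powers_subring[OF assms]])
  have one: "1 \<in> lin_combs R (\<lambda>j. x ^ j) (degree p)"
    using lin_combs_powers_subring[OF assms] subring_one by blast
  show "insert x R \<subseteq> lin_combs R (\<lambda>j. x ^ j) (degree p)"
    using lin_combs_powers_mult_root[OF assms one] lin_combs_mult[OF subring_mult[OF R] one] by auto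
qed

lemma FCP_decreasing_chain_stabilizes:
  assumes fcp: "FCP R S" and V: "\<And>k. V k \<in> intermediate_rings R S" and dec: "\<And>k. V (Suc k) \<subseteq> V k"
  shows "\<exists>k. V (Suc k) = V k"
proof -
  have antimono: "V l \<subseteq> V k" if "k \<le> l" for k l
    using lift_Suc_antimono_le[of V, OF dec that] .
  have "range V \<subseteq> intermediate_rings R S" "\<forall>A\<in>range V. \<forall>B\<in>range V. A \<subseteq> B \<or> B \<subseteq> A"
    using V antimono nat_le_linear by blast+
  then have "finite (range V)"
    using fcp unfolding FCP_def by blast
  then have "\<not> inj V"
    using finite_imageD by blast
  then obtain k l where "k < l" "V k = V l"
    unfolding inj_def by (metis linorder_neqE_nat)
  then have "V (Suc k) = V k"
    using antimono[of "Suc k" l] dec[of k] by auto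
  then show ?thesis ..
qed

lemma subring_plus_multiple:
  assumes R: "is_subring R" and T: "is_subring T" and RT: "R \<subseteq> T" and b: "b \<in> T"
  shows "is_subring {r + b * t | r t. r \<in> R \<and> t \<in> T}" (is "is_subring ?V")
proof -
  have mem: "r + b * t \<in> ?V" if "r \<in> R" "t \<in> T" for r t
    using that by blast
  have "p + q \<in> ?V \<and> p - q \<in> ?V \<and> p * q \<in> ?V" if p: "p \<in> ?V" and q: "q \<in> ?V" for p q
  proof -
    obtain r t where rt: "p = r + b * t" "r \<in> R" "t \<in> T"
      using p by blast
    obtain r' t' where rt': "q = r' + b * t'" "r' \<in> R" "t' \<in> T"
      using q by blast
    have "p + q = (r + r') + b * (t + t')" "p - q = (r - r') + b * (t - t')"
      "p * q = r * r' + b * (r * t' + r' * t + b * t * t')"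
      using rt rt' by (simp_all add: algebra_simps)
    moreover have "r + r' \<in> R" "r - r' \<in> R" "r * r' \<in> R"
      using rt(2) rt'(2) by (simp_all add: subring_add[OF R] subring_diff[OF R] subring_mult[OF R])
    moreover have "t + t' \<in> T" "t - t' \<in> T" "r * t' + r' * t + b * t * t' \<in> T"
      using rt rt' RT b by (blast intro: subring_add[OF T] subring_diff[OF T] subring_mult[OF T])+
    ultimately show ?thesis
      using mem by simp
  qed
  moreover have "1 \<in> ?V"
    using mem[OF subring_one[OF R] subring_zero[OF T]] by simp
  ultimately show ?thesis
    unfolding is_subring_def by blast
qed

lemma FCP_power_multiple_chain_stabilizes:
  assumes R: "is_subring R" and S: "is_subring S" and fcp: "FCP R S"
    and T: "is_subring T" and RT: "R \<subseteq> T" and TS: "T \<subseteq> S" and a: "a \<in> R"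
  shows "\<exists>k. {r + a ^ Suc k * t | r t. r \<in> R \<and> t \<in> T} = {r + a ^ k * t | r t. r \<in> R \<and> t \<in> T}"
proof (rule FCP_decreasing_chain_stabilizes[OF fcp])
  fix k
  have "R \<subseteq> {r + a ^ k * t | r t. r \<in> R \<and> t \<in> T}"
    using subring_zero[OF T] by force
  moreover have "{r + a ^ k * t | r t. r \<in> R \<and> t \<in> T} \<subseteq> S"
    using RT TS subring_power[OF S, of a k] a by (blast intro: subring_add[OF S] subring_mult[OF S])
  ultimately show "{r + a ^ k * t | r t. r \<in> R \<and> t \<in> T} \<in> intermediate_rings R S"
    using subring_plus_multiple[OF R T RT subring_power[OF T]] RT a
    unfolding intermediate_rings_def by blast
  show "{r + a ^ Suc k * t | r t. r \<in> R \<and> t \<in> T} \<subseteq> {r + a ^ k * t | r t. r \<in> R \<and> t \<in> T}"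
  proof
    fix z assume "z \<in> {r + a ^ Suc k * t | r t. r \<in> R \<and> t \<in> T}"
    then obtain r t where "z = r + a ^ k * (a * t)" "r \<in> R" "t \<in> T"
      by (auto simp: ac_simps)
    then show "z \<in> {r + a ^ k * t | r t. r \<in> R \<and> t \<in> T}"
      using subring_mult[OF T] RT a by blast
  qed
qed

text \<open>The rings \<open>R + a\<^sup>k R[x]\<close> form a descending chain, which stabilizes by FCP; from then on the
  \<open>R\<close>-module \<open>a\<^sup>k R[x]\<close>, finitely generated by integrality, lies in \<open>R + I a\<^sup>k R[x]\<close>, and
  Nakayama applies.\<close>

lemma integral_FCP_one_plus_ideal_mult_power:
  assumes R: "is_subring R" and S: "is_subring S" and RS: "R \<subseteq> S"
    and int: "integral_ext R S" and fcp: "FCP R S"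
    and I: "is_ideal R I" and a: "a \<in> I" and x: "x \<in> S"
  shows "\<exists>k. \<exists>i\<in>I. (1 + i) * (a ^ k * x) \<in> R"
proof -
  define T where "T = ring_adj R x"
  have T: "is_subring T" and RT: "R \<subseteq> T" and xT: "x \<in> T" and TS: "T \<subseteq> S"
    using ring_adj_subring ring_adj_contains[of x R] ring_adj_least[OF S] RS x unfolding T_def
    by auto
  obtain p where p: "lead_coeff p = 1" "\<forall>i. coeff p i \<in> R" "poly p x = 0"
    using int x unfolding integral_ext_def by blast
  define d where "d = degree p"
  have T_span: "T \<subseteq> lin_combs R (\<lambda>j. x ^ j) d"
    unfolding T_def d_def using ring_adj_subset_lin_combs_powers[OF R p] .
  have aR: "a \<in> R"
    using a ideal_subset[OF I] by blast
  obtain k where stable: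
    "{r + a ^ Suc k * t | r t. r \<in> R \<and> t \<in> T} = {r + a ^ k * t | r t. r \<in> R \<and> t \<in> T}"
    using FCP_power_multiple_chain_stabilizes[OF R S fcp T RT TS aR] by blast
  define g where "g j = a ^ k * x ^ j" for j
  have "\<exists>i\<in>I. \<forall>j<d. (1 + i) * g j \<in> R"
  proof (rule relative_nakayama[OF R I], intro allI impI)
    fix j
    have "g j \<in> {r + a ^ Suc k * t | r t. r \<in> R \<and> t \<in> T}"
      unfolding stable g_def using subring_zero[OF R] subring_power[OF T xT] by force
    then obtain r t where rt: "g j = r + a * (a ^ k * t)" "r \<in> R" "t \<in> T"
      by (auto simp: ac_simps)
    have "a * (a ^ k * t) \<in> lin_combs I g d"
      using lin_combs_scale_generators[of t R "\<lambda>j. x ^ j" d "a ^ k"] T_span rt(3)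
        lin_combs_mult[of R a I] ideal_mult_right[OF I _ a]
      unfolding g_def by blast
    then show "\<exists>i\<in>I. \<exists>r\<in>R. \<exists>m\<in>lin_combs I g d. (1 + i) * g j = r + m"
      using rt(1,2) ideal_zero[OF I] by force
  qed
  then obtain i where i: "i \<in> I" "\<forall>j<d. (1 + i) * g j \<in> R"
    by blast
  have "a ^ k * x \<in> lin_combs R g d"
    using lin_combs_scale_generators[of x R "\<lambda>j. x ^ j" d "a ^ k"] T_span xT unfolding g_def by blast
  then have "(1 + i) * (a ^ k * x) \<in> R"
    using mult_lin_combs_mem[OF R _ i(2)] by blast
  with i(1) show ?thesis by blast
qed

section \<open>Critical ideals and crucial extensions\<close>

lemma critical_ideal_imp_maximal_ideal:
  assumes R: "is_subring R" and S: "is_subring S" and RS: "R \<subset> S"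
    and int: "integral_ext R S" and fcp: "FCP R S" and J: "critical_ideal R S J"
  shows "maximal_ideal R J"
proof -
  obtain x where x: "x \<in> S - R"
    using RS by blast
  have J_ideal: "is_ideal R J" and J_rad: "\<forall>y\<in>S - R. J = radical R (colon_elt R y)"
    using J by (auto simp: critical_ideal_def)
  have colon_subset: "colon_elt R y \<subseteq> J" if "y \<in> S - R" for y
    using J_rad that subset_radical[of "colon_elt R y" R] by (auto simp: colon_elt_def)
  have "1 \<notin> radical R (colon_elt R x)"
    using x by (simp add: radical_def colon_elt_def)
  then have "J \<noteq> R"
    using J_rad x subring_one[OF R] by blast
  moreover have "K = R" if K: "is_ideal R K" "J \<subseteq> K" "K \<noteq> J" for K
  proof -
    obtain a where a: "a \<in> K" "a \<notin> J"
      using K by blast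
    then have aR: "a \<in> R"
      using ideal_subset[OF K(1)] by blast
    obtain k i where i: "i \<in> K" "(1 + i) * (a ^ k * x) \<in> R"
      using integral_FCP_one_plus_ideal_mult_power[OF R S _ int fcp K(1) a(1)] RS x by blast
    have "a ^ k * x \<notin> R"
    proof
      assume "a ^ k * x \<in> R"
      then have "a \<in> radical R (colon_elt R x)"
        using aR subring_power[OF R aR] unfolding radical_def colon_elt_def by blast
      with a(2) J_rad x show False by blast
    qed
    moreover have "a ^ k * x \<in> S"
      using x aR RS subring_power[OF S] subring_mult[OF S] by blast
    ultimately have "1 + i \<in> K"
      using colon_subset[of "a ^ k * x"] i K(2) ideal_subset[OF K(1)]
        subring_add[OF R subring_one[OF R]] unfolding colon_elt_def by blast
    then have "1 \<in> K"
      using ideal_diff[OF R K(1) _ i(1)] by fastforce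
    then show "K = R"
      using ideal_eq_if_one_mem[OF R K(1)] by blast
  qed
  ultimately show ?thesis
    using J_ideal unfolding maximal_ideal_def by blast
qed

lemma critical_ideal_imp_crucial:
  assumes R: "is_subring R" and RS: "R \<subset> S"
    and J_max: "maximal_ideal R J" and J: "critical_ideal R S J"
  shows "crucial R S J"
proof -
  have J_rad: "\<forall>y\<in>S - R. J = radical R (colon_elt R y)"
    using J by (auto simp: critical_ideal_def)
  have J_prime: "prime_ideal R J"
    using maximal_ideal_imp_prime_ideal[OF R J_max] .
  obtain x where x: "x \<in> S - R"
    using RS by blast
  have "colon_elt R x \<subseteq> J"
    using J_rad x subset_radical[of "colon_elt R x" R] by (auto simp: colon_elt_def)
  then have "J \<in> Supp R S"
    using Supp_iff_colon_elt[OF R] RS J_prime x by blast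
  moreover have "P = J" if "P \<in> Supp R S" for P
  proof -
    obtain s where P: "prime_ideal R P" and s: "s \<in> S" "colon_elt R s \<subseteq> P"
      using Supp_iff_colon_elt[OF R] RS \<open>P \<in> Supp R S\<close> by blast
    have "s \<notin> R"
      using s(2) prime_ideal_one_notin[OF R P] subring_one[OF R] by (auto simp: colon_elt_def)
    then have "J \<subseteq> P"
      using J_rad s radical_subset_prime_ideal[OF R P] by blast
    then show "P = J"
      using J_max P unfolding maximal_ideal_def prime_ideal_def by blast
  qed
  ultimately show ?thesis
    unfolding crucial_def by blast
qed

lemma crucial_colon_elt_subset:
  assumes R: "is_subring R" and RS: "R \<subseteq> S" and M: "crucial R S M" and x: "x \<in> S - R"
  shows "colon_elt R x \<subseteq> M"
proof -
  obtain P where P: "prime_ideal R P" "colon_elt R x \<subseteq> P"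
    using exists_prime_ideal_avoiding_powers[OF R colon_elt_ideal[OF R] subring_one[OF R]] x
    by (auto simp: colon_elt_def)
  then have "P \<in> Supp R S"
    using Supp_iff_colon_elt[OF R RS] x by blast
  with M P(2) show ?thesis
    unfolding crucial_def by blast
qed

lemma crucial_subset_radical_conductor:
  assumes R: "is_subring R" and S: "is_subring S" and RS: "R \<subseteq> S" and int: "integral_ext R S"
    and M: "crucial R S M" and x: "x \<in> S"
  shows "M \<subseteq> radical R (conductor R (ring_adj R x))"
proof
  fix m assume m: "m \<in> M"
  have "M \<in> Supp R S"
    using M unfolding crucial_def by blast
  then have mR: "m \<in> R"
    using m ideal_subset[OF prime_ideal_is_ideal] Supp_iff_colon_elt[OF R RS] by blast
  show "m \<in> radical R (conductor R (ring_adj R x))"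
  proof (rule ccontr)
    assume "m \<notin> radical R (conductor R (ring_adj R x))"
    then obtain P where P: "prime_ideal R P" "conductor R (ring_adj R x) \<subseteq> P" "m \<notin> P"
      using exists_prime_ideal_avoiding_powers[OF R conductor_ideal[OF R] mR] mR
      unfolding radical_def by blast
    then have "P \<notin> Supp R S"
      using m M unfolding crucial_def by blast
    then have denominators: "\<exists>v\<in>R - P. v * s \<in> R" if "s \<in> S" for s
      using that P(1) Supp_iff_colon_elt[OF R RS] unfolding colon_elt_def by blast
    obtain p where p: "lead_coeff p = 1" "\<forall>i. coeff p i \<in> R" "poly p x = 0"
      using int x unfolding integral_ext_def by blast
    obtain e where e: "e \<in> R - P" "\<forall>j<degree p. e * x ^ j \<in> R"
      using common_denominator[OF R P(1), of "degree p" "\<lambda>j. x ^ j"] denominators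
        subring_power[OF S x] by blast
    then have "e \<in> conductor R (ring_adj R x)"
      using mult_lin_combs_mem[OF R _ e(2)] ring_adj_subset_lin_combs_powers[OF R p]
      unfolding conductor_def by blast
    with P(2) e(1) show False
      by blast
  qed
qed

lemma crucial_radical_eq:
  assumes R: "is_subring R" and S: "is_subring S" and RS: "R \<subseteq> S" and int: "integral_ext R S"
    and M: "crucial R S M" and x: "x \<in> S - R"
  shows "M = radical R (colon_elt R x)" and "M = radical R (conductor R (ring_adj R x))"
proof -
  have "prime_ideal R M"
    using M Supp_iff_colon_elt[OF R RS] unfolding crucial_def by blast
  then have "radical R (colon_elt R x) \<subseteq> M"
    using radical_subset_prime_ideal[OF R] crucial_colon_elt_subset[OF R RS M x] by blast
  moreover have "M \<subseteq> radical R (conductor R (ring_adj R x))"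
    using crucial_subset_radical_conductor[OF R S RS int M] x by blast
  moreover have "radical R (conductor R (ring_adj R x)) \<subseteq> radical R (colon_elt R x)"
    using radical_mono[OF conductor_subset_colon_elt] ring_adj_contains by blast
  ultimately show "M = radical R (colon_elt R x)" "M = radical R (conductor R (ring_adj R x))"
    by blast+
qed

theorem proposition6p8:
  fixes R S :: "'a::comm_ring_1 set"
  assumes "is_subring R" and "is_subring S" and "R \<subset> S"
    and "integral_ext R S" and "FCP R S"
  shows "((\<exists>J. critical_ideal R S J) \<longleftrightarrow> (\<exists>M \<in> Max_ideals R. crucial R S M))
    \<and> (\<forall>M \<in> Max_ideals R. crucial R S M \<longrightarrow>
         critical_ideal R S M \<and> (\<forall>x \<in> S - R. M = radical R (conductor R (ring_adj R x))))"
proof -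
  have RS: "R \<subseteq> S"
    using assms(3) by blast
  have critical_imp: "\<exists>M \<in> Max_ideals R. crucial R S M" if "critical_ideal R S J" for J
    using critical_ideal_imp_maximal_ideal[OF assms that]
      critical_ideal_imp_crucial[OF assms(1,3) _ that] unfolding Max_ideals_def by blast
  have crucial_imp: "critical_ideal R S M \<and> (\<forall>x \<in> S - R. M = radical R (conductor R (ring_adj R x)))"
    if "M \<in> Max_ideals R" "crucial R S M" for M
  proof -
    have "is_ideal R M"
      using that(1) by (simp add: Max_ideals_def maximal_ideal_def)
    then show ?thesis
      using crucial_radical_eq[OF assms(1,2) RS assms(4) that(2)] unfolding critical_ideal_def by blast
  qed
  show ?thesis
    using critical_imp crucial_imp by blast
qed

end
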